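(* Let $k\ge 3$ and let $K_{2k-1}$ denote the simplicial complex given by the standard Gale diagram which places the vertex $i$ at $v_i$ for $i=1,\dots,2k-1$ (the boundary complex of the dual of $P_{[2k-1]}$). Let $J=(a_1,\dots,a_{2k-1})$ be a vector of positive integers. Then $K_{2k-1}(J)$ is (isomorphic to) the simplicial complex given by the standard Gale diagram with $a_i$ points at $v_i$ for each $i$; in polytope language, $P_{[2k-1]}(J)=[a_1,\dots,a_{2k-1}]$.
   Context: Let $v_1,\dots,v_{2k-1}$ be the vertices, in counterclockwise order, of a regular $(2k-1)$-gon in $\mathbb{R}^2$ centered at the origin $O$. A standard Gale diagram is a surjection $\phi$ from a finite set $V$ to $\{v_1,\dots,v_{2k-1}\}$; it determines the simplicial complex on $V$ in which $I\subseteq V$ is a face iff $O\in\operatorname{conv}\{\phi(j):j\in V\setminus I\}$. With $a_i=|\phi^{-1}(v_i)|$, the simple polytope dual to the simplicial polytope with this boundary complex is denoted $[a_1,\dots,a_{2k-1}]$, and $P_{[2k-1]}=[1,\dots,1]$ with facet $i$ corresponding to $v_i$. For a complex $K$ on $[m]$ and $J=(j_1,\dots,j_m)$ positive integers, $K(J)$ is the complex on vertices $i_1,\dots,i_{j_i}$ whose minimal non-faces are the sets $\bigcup_{r}\{(i_r)_1,\dots,(i_r)_{j_{i_r}}\}$ for minimal non-faces $\{i_1,\dots,i_s\}$ of $K$; $P(J)$ denotes the simple polytope whose dual boundary complex is $K(J)$ when $K$ is that of $P$. *)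

theory Defs
  imports "HOL-Analysis.Analysis"
begin

definition gale_vertex :: "nat \<Rightarrow> nat \<Rightarrow> complex" where
  "gale_vertex n i = cis (2 * pi * real i / real n)"

definition gale_complex :: "nat \<Rightarrow> 'a set \<Rightarrow> ('a \<Rightarrow> nat) \<Rightarrow> 'a set set" where
  "gale_complex n V phi =
     {I. I \<subseteq> V \<and> (0::complex) \<in> convex hull ((\<lambda>j. gale_vertex n (phi j)) ` (V - I))}"

definition min_nonfaces :: "'a set \<Rightarrow> 'a set set \<Rightarrow> 'a set set" where
  "min_nonfaces V K = {N. N \<subseteq> V \<and> N \<notin> K \<and> (\<forall>N'. N' \<subset> N \<longrightarrow> N' \<in> K)}"

text \<open>Vertex set of K(J) for K on {0..m-1}: vertex i is replaced by (i,0),...,(i,J i - 1).\<close>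
definition wedge_vertices :: "nat \<Rightarrow> (nat \<Rightarrow> nat) \<Rightarrow> (nat \<times> nat) set" where
  "wedge_vertices m J = {(i, r). i < m \<and> r < J i}"

text \<open>K(J): the complex on wedge_vertices whose minimal non-faces are the sets
  U_{i in N} {(i,0),...,(i,J i - 1)} for minimal non-faces N of K; i.e. faces are the subsets
  containing none of these sets.\<close>
definition wedge_complex :: "nat \<Rightarrow> nat set set \<Rightarrow> (nat \<Rightarrow> nat) \<Rightarrow> (nat \<times> nat) set set" where
  "wedge_complex m K J =
     {\<sigma>. \<sigma> \<subseteq> wedge_vertices m J \<and>
          (\<forall>N \<in> min_nonfaces {..<m} K. \<not> (\<Union>i\<in>N. {i} \<times> {..<J i}) \<subseteq> \<sigma>)}"

definition simp_iso :: "'a set \<Rightarrow> 'a set set \<Rightarrow> 'b set \<Rightarrow> 'b set set \<Rightarrow> bool" where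
  "simp_iso V1 K1 V2 K2 \<longleftrightarrow>
     (\<exists>f. bij_betw f V1 V2 \<and> (\<forall>\<sigma>. \<sigma> \<subseteq> V1 \<longrightarrow> (\<sigma> \<in> K1 \<longleftrightarrow> f ` \<sigma> \<in> K2)))"

end

theory Submission
  imports Defs
begin

lemma in_complex_iff_no_min_nonface:
  fixes K :: "'b set set"
  assumes "finite B" and "C \<subseteq> B"
    and down: "\<And>A A'. A \<in> K \<Longrightarrow> A' \<subseteq> A \<Longrightarrow> A' \<in> K"
  shows "C \<in> K \<longleftrightarrow> (\<forall>N \<in> min_nonfaces B K. \<not> N \<subseteq> C)"
proof
  assume "C \<in> K"
  then show "\<forall>N \<in> min_nonfaces B K. \<not> N \<subseteq> C"
    using down unfolding min_nonfaces_def by blast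
next
  assume no_min: "\<forall>N \<in> min_nonfaces B K. \<not> N \<subseteq> C"
  show "C \<in> K"
  proof (rule ccontr)
    assume "C \<notin> K"
    let ?S = "{N. N \<subseteq> C \<and> N \<notin> K}"
    have "finite ?S"
      using assms(1,2) by (metis (no_types, lifting) finite_Pow_iff finite_subset mem_Collect_eq PowI subsetI)
    moreover have "?S \<noteq> {}"
      using \<open>C \<notin> K\<close> by blast
    obtain N where N: "N \<in> ?S" and minimal: "\<forall>N' \<in> ?S. N' \<le> N \<longrightarrow> N = N'"
      using finite_has_minimal[OF \<open>finite ?S\<close> \<open>?S \<noteq> {}\<close>] by blast
    have "N \<in> min_nonfaces B K"
      unfolding min_nonfaces_def using N minimal assms(2) by auto
    then show False
      using no_min N by blast
  qed
qed

lemma gale_complex_downward_closed: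
  assumes "A \<in> gale_complex n V phi" and "A' \<subseteq> A"
  shows "A' \<in> gale_complex n V phi"
proof -
  have "convex hull ((\<lambda>j. gale_vertex n (phi j)) ` (V - A)) \<subseteq>
        convex hull ((\<lambda>j. gale_vertex n (phi j)) ` (V - A'))"
    using assms(2) by (intro hull_mono) auto
  then show ?thesis
    using assms unfolding gale_complex_def by auto
qed

lemma gale_complex_iff_polygon_face:
  assumes "I \<subseteq> V" and "C \<subseteq> {..<n}" and "phi ` (V - I) = {..<n} - C"
  shows "I \<in> gale_complex n V phi \<longleftrightarrow> C \<in> gale_complex n {..<n} id"
proof -
  have "(\<lambda>j. gale_vertex n (phi j)) ` (V - I) = gale_vertex n ` ({..<n} - C)"
    using assms(3) by (metis image_image)
  then show ?thesis
    using assms(1,2) unfolding gale_complex_def by simp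
qed

definition full_blocks :: "nat \<Rightarrow> (nat \<Rightarrow> nat) \<Rightarrow> (nat \<times> nat) set \<Rightarrow> nat set" where
  "full_blocks m J \<sigma> = {i. i < m \<and> {i} \<times> {..<J i} \<subseteq> \<sigma>}"

lemma wedge_complex_iff_full_blocks:
  assumes "\<sigma> \<subseteq> wedge_vertices m J"
    and down: "\<And>A A'. A \<in> K \<Longrightarrow> A' \<subseteq> A \<Longrightarrow> A' \<in> K"
  shows "\<sigma> \<in> wedge_complex m K J \<longleftrightarrow> full_blocks m J \<sigma> \<in> K"
proof -
  have "(\<Union>i\<in>N. {i} \<times> {..<J i}) \<subseteq> \<sigma> \<longleftrightarrow> N \<subseteq> full_blocks m J \<sigma>"
    if "N \<in> min_nonfaces {..<m} K" for N
    using that unfolding min_nonfaces_def full_blocks_def by blast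
  then have "\<sigma> \<in> wedge_complex m K J \<longleftrightarrow>
             (\<forall>N \<in> min_nonfaces {..<m} K. \<not> N \<subseteq> full_blocks m J \<sigma>)"
    using assms(1) unfolding wedge_complex_def by auto
  also have "\<dots> \<longleftrightarrow> full_blocks m J \<sigma> \<in> K"
    by (rule in_complex_iff_no_min_nonface[symmetric])
      (auto simp: full_blocks_def intro: down)
  finally show ?thesis .
qed

lemma fibre_preserving_bij:
  assumes "finite V" and "\<forall>x \<in> V. phi x < m"
    and "\<forall>i < m. card {x \<in> V. phi x = i} = J i"
  obtains f where "bij_betw f (wedge_vertices m J) V"
    and "\<And>i r. (i, r) \<in> wedge_vertices m J \<Longrightarrow> phi (f (i, r)) = i"
proof -
  define F where "F i = {x \<in> V. phi x = i}" for i
  have "\<exists>h. bij_betw h {..<J i} (F i)" if "i < m" for i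
    using that assms(1,3) by (intro finite_same_card_bij) (auto simp: F_def)
  then obtain h where h: "\<And>i. i < m \<Longrightarrow> bij_betw (h i) {..<J i} (F i)"
    by metis
  define f where "f = (\<lambda>(i, r). h i r)"
  have W: "wedge_vertices m J = Sigma {..<m} (\<lambda>i. {..<J i})"
    unfolding wedge_vertices_def by auto
  have f_fibre: "f (i, r) \<in> F i" if "(i, r) \<in> wedge_vertices m J" for i r
    using that h bij_betw_apply unfolding W f_def by fastforce
  have "inj_on f (wedge_vertices m J)"
  proof (rule inj_onI, clarify)
    fix i r j s
    assume ir: "(i, r) \<in> wedge_vertices m J" and js: "(j, s) \<in> wedge_vertices m J"
      and eq: "f (i, r) = f (j, s)"
    have "i = j"
      using f_fibre[OF ir] f_fibre[OF js] eq unfolding F_def by auto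
    then show "i = j \<and> r = s"
      using ir js eq h unfolding W f_def bij_betw_def inj_on_def by auto
  qed
  moreover have "f ` wedge_vertices m J = V"
  proof
    show "f ` wedge_vertices m J \<subseteq> V"
      using f_fibre unfolding F_def by auto
    show "V \<subseteq> f ` wedge_vertices m J"
    proof
      fix x assume "x \<in> V"
      then have "phi x < m" "x \<in> F (phi x)"
        using assms(2) unfolding F_def by auto
      then obtain r where "r < J (phi x)" "x = f (phi x, r)"
        using h unfolding bij_betw_def f_def by force
      then show "x \<in> f ` wedge_vertices m J"
        using \<open>phi x < m\<close> unfolding W by blast
    qed
  qed
  ultimately show thesis
    using that f_fibre unfolding bij_betw_def F_def by blast
qed

lemma image_complement_eq_missed_blocks:
  assumes f: "bij_betw f (wedge_vertices m J) V"
    and fibre: "\<And>i r. (i, r) \<in> wedge_vertices m J \<Longrightarrow> phi (f (i, r)) = i"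
    and \<sigma>: "\<sigma> \<subseteq> wedge_vertices m J"
  shows "phi ` (V - f ` \<sigma>) = {..<m} - full_blocks m J \<sigma>"
proof -
  have "V - f ` \<sigma> = f ` (wedge_vertices m J - \<sigma>)"
    using inj_on_image_set_diff[OF bij_betw_imp_inj_on[OF f] _ \<sigma>] bij_betw_imp_surj_on[OF f]
    by simp
  then have "phi ` (V - f ` \<sigma>) = (phi \<circ> f) ` (wedge_vertices m J - \<sigma>)"
    by (simp add: image_comp)
  also have "\<dots> = fst ` (wedge_vertices m J - \<sigma>)"
    using fibre by (intro image_cong) auto
  also have "\<dots> = {..<m} - full_blocks m J \<sigma>"
  proof (intro equalityI subsetI)
    fix i assume "i \<in> fst ` (wedge_vertices m J - \<sigma>)"
    then obtain r where "i < m" "r < J i" "(i, r) \<notin> \<sigma>"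
      unfolding wedge_vertices_def by auto
    then show "i \<in> {..<m} - full_blocks m J \<sigma>"
      unfolding full_blocks_def by auto
  next
    fix i assume "i \<in> {..<m} - full_blocks m J \<sigma>"
    then obtain r where "i < m" "r < J i" "(i, r) \<notin> \<sigma>"
      unfolding full_blocks_def by auto
    then have "(i, r) \<in> wedge_vertices m J - \<sigma>"
      unfolding wedge_vertices_def by simp
    then show "i \<in> fst ` (wedge_vertices m J - \<sigma>)"
      by (metis fst_conv image_eqI)
  qed
  finally show ?thesis .
qed

theorem lemma6p4:
  fixes k :: nat and J :: "nat \<Rightarrow> nat" and V :: "'a set" and phi :: "'a \<Rightarrow> nat"
  assumes "k \<ge> 3"
    and "\<forall>i < 2*k-1. J i > 0"
    and "finite V"
    and "phi ` V = {..<2*k-1}"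
    and "\<forall>i < 2*k-1. card {x \<in> V. phi x = i} = J i"
  shows "simp_iso (wedge_vertices (2*k-1) J)
                  (wedge_complex (2*k-1) (gale_complex (2*k-1) {..<2*k-1} id) J)
                  V (gale_complex (2*k-1) V phi)"
proof -
  define n where "n = 2*k-1"
  have "\<forall>x \<in> V. phi x < n"
    using assms(4) unfolding n_def by auto
  then obtain f where f: "bij_betw f (wedge_vertices n J) V"
    and fibre: "\<And>i r. (i, r) \<in> wedge_vertices n J \<Longrightarrow> phi (f (i, r)) = i"
    by (rule fibre_preserving_bij[OF assms(3) _ assms(5)[folded n_def]]) blast
  have "\<sigma> \<in> wedge_complex n (gale_complex n {..<n} id) J \<longleftrightarrow> f ` \<sigma> \<in> gale_complex n V phi"
    if \<sigma>: "\<sigma> \<subseteq> wedge_vertices n J" for \<sigma>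
  proof -
    have "f ` \<sigma> \<subseteq> V"
      using \<sigma> bij_betw_imp_surj_on[OF f] by blast
    then have "f ` \<sigma> \<in> gale_complex n V phi \<longleftrightarrow> full_blocks n J \<sigma> \<in> gale_complex n {..<n} id"
      by (rule gale_complex_iff_polygon_face[OF _ _ image_complement_eq_missed_blocks[OF f fibre \<sigma>]])
        (auto simp: full_blocks_def)
    moreover have "\<sigma> \<in> wedge_complex n (gale_complex n {..<n} id) J \<longleftrightarrow>
                   full_blocks n J \<sigma> \<in> gale_complex n {..<n} id"
      using \<sigma> gale_complex_downward_closed by (rule wedge_complex_iff_full_blocks)
    ultimately show ?thesis
      by simp
  qed
  with f show ?thesis
    unfolding simp_iso_def n_def[symmetric] by blast
qed

end
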